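(* Consider the SDP pair and one-step ADMM of the context (with $\mathcal A$ surjective and nonempty KKT set). For every $k\in\mathbb N$, $$\|Z^{(k+1)}-Z^{(k)}\|_F^2=\|\mathcal P(X^{(k)}-\widetilde X)\|_F^2+\sigma^2\|\mathcal P^\perp(S^{(k)}-C)\|_F^2,$$ where $\widetilde X\in\mathbb S^n$ is an arbitrary matrix with $\mathcal A\widetilde X=b$, and $$\|Z^{(k+1)}-Z^{(k)}\|_F^2\le\operatorname{dist}^2(Z^{(k)},\mathcal Z_\star)-\operatorname{dist}^2(Z^{(k+1)},\mathcal Z_\star).$$
   Context: $\mathbb S^n$: real symmetric matrices, trace inner product, Frobenius norm; $\Pi_{\mathbb S^n_+}$ projection onto the PSD cone; $\operatorname{dist}(Z,\mathcal S)=\inf_{W\in\mathcal S}\|Z-W\|_F$. SDP pair: min $\langle C,X\rangle$ s.t. $\mathcal AX=b$, $X\succeq0$ / max $b^\top y$ s.t. $\mathcal A^*y+S=C$, $S\succeq0$, with $C,A_i\in\mathbb S^n$, $\mathcal AX=(\langle A_i,X\rangle)_i$ surjective, $\mathcal A^*y=\sum y_iA_i$, KKT set nonempty. $\mathcal P=\mathcal A^*(\mathcal A\mathcal A^* )^{-1}\mathcal A$, $\mathcal P^\perp=\mathrm{Id}-\mathcal P$. For $\sigma>0$ and $Z^{(0)}\in\mathbb S^n$: $Z^{(k+1)}=\mathcal P(-2\Pi_{\mathbb S^n_+}(Z^{(k)})+Z^{(k)})+\Pi_{\mathbb S^n_+}(Z^{(k)})+\mathcal A^*(\mathcal A\mathcal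 A^* )^{-1}b+\sigma\mathcal PC-\sigma C$, $X^{(k)}=\Pi_{\mathbb S^n_+}(Z^{(k)})$, $S^{(k)}=\sigma^{-1}\Pi_{\mathbb S^n_+}(-Z^{(k)})$. $\mathcal Z_\star$ is the set of fixed points of this iteration map. *)

theory Defs
  imports "HOL-Analysis.Analysis"
begin

text \<open>Matrices are elements of real^'n^'n. The HOL-Analysis norm on this type is the
Frobenius norm and the inner product is the trace inner product sum_ij A_ij B_ij.\<close>

definition sym_mats :: "(real^'n^'n) set" where
  "sym_mats = {X. transpose X = X}"

definition psd_cone :: "(real^'n^'n) set" where
  "psd_cone = {X. transpose X = X \<and> (\<forall>v. v \<bullet> (X *v v) \<ge> 0)}"

definition proj_psd :: "real^'n^'n \<Rightarrow> real^'n^'n" where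
  "proj_psd Z = closest_point psd_cone Z"

definition Aop :: "('m::finite \<Rightarrow> real^'n^'n) \<Rightarrow> real^'n^'n \<Rightarrow> real^'m" where
  "Aop A X = (\<chi> i. A i \<bullet> X)"

definition Aadj :: "('m::finite \<Rightarrow> real^'n^'n) \<Rightarrow> real^'m \<Rightarrow> real^'n^'n" where
  "Aadj A y = (\<Sum>i\<in>UNIV. (y $ i) *\<^sub>R A i)"

definition AAadj :: "('m::finite \<Rightarrow> real^'n^'n) \<Rightarrow> real^'m^'m" where
  "AAadj A = (\<chi> i j. A i \<bullet> A j)"

definition Pop :: "('m::finite \<Rightarrow> real^'n^'n) \<Rightarrow> real^'n^'n \<Rightarrow> real^'n^'n" where
  "Pop A Z = Aadj A (matrix_inv (AAadj A) *v Aop A Z)"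

definition Pperp :: "('m::finite \<Rightarrow> real^'n^'n) \<Rightarrow> real^'n^'n \<Rightarrow> real^'n^'n" where
  "Pperp A Z = Z - Pop A Z"

definition admm_step :: "('m::finite \<Rightarrow> real^'n^'n) \<Rightarrow> real^'m \<Rightarrow> real^'n^'n \<Rightarrow> real
    \<Rightarrow> real^'n^'n \<Rightarrow> real^'n^'n" where
  "admm_step A b C \<sigma> Z =
     Pop A (-(2 *\<^sub>R proj_psd Z) + Z) + proj_psd Z
     + Aadj A (matrix_inv (AAadj A) *v b) + \<sigma> *\<^sub>R Pop A C - \<sigma> *\<^sub>R C"

definition admm_fixpoints :: "('m::finite \<Rightarrow> real^'n^'n) \<Rightarrow> real^'m \<Rightarrow> real^'n^'n \<Rightarrow> real
    \<Rightarrow> (real^'n^'n) set" where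
  "admm_fixpoints A b C \<sigma> = {Z \<in> sym_mats. admm_step A b C \<sigma> Z = Z}"

definition kkt_set :: "('m::finite \<Rightarrow> real^'n^'n) \<Rightarrow> real^'m \<Rightarrow> real^'n^'n
    \<Rightarrow> ((real^'n^'n) \<times> (real^'m) \<times> (real^'n^'n)) set" where
  "kkt_set A b C = {(X, y, S). Aop A X = b \<and> X \<in> psd_cone \<and>
      Aadj A y + S = C \<and> S \<in> psd_cone \<and> X \<bullet> S = 0}"

end

theory Submission
  imports Defs
begin

text \<open>The ADMM map is the Douglas--Rachford operator
  \<open>T Z = \<P> (Z - \<Pi> Z) + \<P>\<^sup>\<bottom> (\<Pi> Z) + const\<close> of the psd cone and the affine constraint set,
  with \<open>\<Pi>\<close> the projection onto the psd cone and \<open>\<P>\<close> the orthogonal projection onto the range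
  of \<open>\<A>\<^sup>*\<close>. For symmetric \<open>Z\<close>, Moreau's decomposition \<open>\<Pi> (- Z) = \<Pi> Z - Z\<close> (the psd cone is
  self-dual) splits \<open>T Z - Z\<close> into a component in the range of \<open>\<P>\<close> and one in the range of
  \<open>\<P>\<^sup>\<bottom>\<close>; Pythagoras gives the identity. Firm nonexpansiveness of \<open>\<Pi>\<close> is inherited by \<open>T\<close>, and
  for a firmly nonexpansive map \<open>\<parallel>T Z - Z\<parallel>\<^sup>2 \<le> \<parallel>Z - Z\<^sub>\<star>\<parallel>\<^sup>2 - \<parallel>T Z - Z\<^sub>\<star>\<parallel>\<^sup>2\<close> at every
  fixed point \<open>Z\<^sub>\<star>\<close>; passing to the infimum over \<open>Z\<^sub>\<star>\<close> gives the inequality. Fixed points exist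
  because \<open>X - \<sigma> S\<close> is one for every KKT triple \<open>(X, y, S)\<close>.\<close>

section \<open>Projections onto closed convex sets\<close>

lemma closest_point_eqI:
  fixes a x :: "'a::{real_inner,heine_borel}"
  assumes "convex S" "closed S" "x \<in> S"
    and variational: "\<And>y. y \<in> S \<Longrightarrow> (a - x) \<bullet> (y - x) \<le> 0"
  shows "closest_point S a = x"
proof -
  have "dist a x \<le> dist a y" if "y \<in> S" for y
  proof -
    have "(norm (a - x))\<^sup>2 \<le> (norm (a - x))\<^sup>2 - 2 * ((a - x) \<bullet> (y - x)) + (norm (y - x))\<^sup>2"
      using variational[OF that] zero_le_power2[of "norm (y - x)"] by linarith
    also have "\<dots> = (norm (a - y))\<^sup>2"
      by (simp add: power2_norm_eq_inner inner_diff_left inner_diff_right inner_commute)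
    finally show ?thesis by (simp add: dist_norm power2_le_iff_abs_le)
  qed
  then show ?thesis
    using closest_point_unique[OF assms(1-3)] by metis
qed

lemma closest_point_residual_monotone:
  fixes a b :: "'a::{real_inner,heine_borel}"
  assumes "convex S" "closed S" "S \<noteq> {}"
  shows "0 \<le> ((a - closest_point S a) - (b - closest_point S b))
    \<bullet> (closest_point S a - closest_point S b)"
proof -
  have "(a - closest_point S a) \<bullet> (closest_point S b - closest_point S a) \<le> 0"
    by (rule closest_point_dot[OF assms(1,2) closest_point_in_set[OF assms(2,3)]])
  moreover have "(b - closest_point S b) \<bullet> (closest_point S a - closest_point S b) \<le> 0"
    by (rule closest_point_dot[OF assms(1,2) closest_point_in_set[OF assms(2,3)]])
  ultimately show ?thesis by (simp add: inner_diff_left inner_diff_right inner_commute)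
qed

lemma closest_point_convex_cone_orthogonal:
  fixes a :: "'a::{real_inner,heine_borel}"
  assumes "convex_cone K" "closed K"
  shows "(a - closest_point K a) \<bullet> closest_point K a = 0"
proof -
  let ?p = "closest_point K a"
  have cvx: "convex K" using assms(1) by (simp add: convex_cone_def)
  have p: "?p \<in> K" by (rule closest_point_in_set[OF assms(2) convex_cone_nonempty[OF assms(1)]])
  have "0 \<in> K" "2 *\<^sub>R ?p \<in> K"
    using assms(1) p by (simp_all add: convex_cone_iff)
  then have "(a - ?p) \<bullet> (0 - ?p) \<le> 0" "(a - ?p) \<bullet> (2 *\<^sub>R ?p - ?p) \<le> 0"
    by (simp_all only: closest_point_dot[OF cvx assms(2)])
  then show ?thesis by (simp add: inner_diff_right algebra_simps)
qed

lemma closest_point_convex_cone_normal: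
  fixes a :: "'a::{real_inner,heine_borel}"
  assumes "convex_cone K" "closed K" "w \<in> K"
  shows "(a - closest_point K a) \<bullet> w \<le> 0"
proof -
  let ?p = "closest_point K a"
  have cvx: "convex K" using assms(1) by (simp add: convex_cone_def)
  have p: "?p \<in> K" by (rule closest_point_in_set[OF assms(2) convex_cone_nonempty[OF assms(1)]])
  have "(a - ?p) \<bullet> ((w + ?p) - ?p) \<le> 0"
    using closest_point_dot[OF cvx assms(2) convex_cone_add[OF assms(1,3) p]] .
  then show ?thesis by simp
qed

text \<open>Moreau's decomposition for a self-dual cone \<open>K\<close>: \<open>acute\<close> is the inclusion of \<open>K\<close> in its
  dual cone, and \<open>dual\<close> is what the reverse inclusion gives at \<open>a\<close>, since
  \<open>closest_point K a - a\<close> lies in the dual cone.\<close>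
lemma closest_point_convex_cone_uminus:
  fixes a :: "'a::{real_inner,heine_borel}"
  assumes K: "convex_cone K" "closed K"
    and acute: "\<And>x y. x \<in> K \<Longrightarrow> y \<in> K \<Longrightarrow> 0 \<le> x \<bullet> y"
    and dual: "closest_point K a - a \<in> K"
  shows "closest_point K (- a) = closest_point K a - a"
proof (rule closest_point_eqI[OF _ K(2) dual])
  show "convex K" using K(1) by (simp add: convex_cone_def)
  let ?p = "closest_point K a"
  fix w assume "w \<in> K"
  have p: "?p \<in> K" by (rule closest_point_in_set[OF K(2) convex_cone_nonempty[OF K(1)]])
  have "(- a - (?p - a)) \<bullet> (w - (?p - a)) = - (?p \<bullet> w) - (a - ?p) \<bullet> ?p"
    by (simp add: inner_diff_left inner_diff_right inner_commute algebra_simps)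
  also have "\<dots> \<le> 0"
    using closest_point_convex_cone_orthogonal[OF K, of a] acute[OF p \<open>w \<in> K\<close>] by simp
  finally show "(- a - (?p - a)) \<bullet> (w - (?p - a)) \<le> 0" .
qed

lemma douglas_rachford_firmly_nonexpansive:
  fixes P :: "'a::{real_inner,heine_borel} \<Rightarrow> 'a"
  assumes P: "linear P" "\<And>x. P (P x) = P x" "\<And>x y. P x \<bullet> y = x \<bullet> P y"
    and S: "convex S" "closed S" "S \<noteq> {}"
    and T: "\<And>z. T z = P (z - closest_point S z) + (closest_point S z - P (closest_point S z)) + c"
  shows "(norm (T z1 - T z2))\<^sup>2 \<le> (T z1 - T z2) \<bullet> (z1 - z2)"
proof -
  define u where "u = (z1 - closest_point S z1) - (z2 - closest_point S z2)"
  define v where "v = closest_point S z1 - closest_point S z2"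
  have proj_sq: "P x \<bullet> x = P x \<bullet> P x" for x by (metis P(2,3))
  have orth: "P x \<bullet> (y - P y) = 0" "(y - P y) \<bullet> P x = 0" for x y
    by (simp_all add: inner_diff_left inner_diff_right P(2,3))
  have sum: "z1 - z2 = u + v" by (simp add: u_def v_def)
  have diff: "T z1 - T z2 = P u + (v - P v)"
    unfolding T u_def v_def by (simp add: linear_diff[OF P(1)] linear_add[OF P(1)] algebra_simps)
  have "(norm (P u + (v - P v)))\<^sup>2 = P u \<bullet> P u + (v - P v) \<bullet> (v - P v)"
    by (simp only: power2_norm_eq_inner inner_add_left inner_add_right orth)
  also have "\<dots> = P u \<bullet> u + (v - P v) \<bullet> v"
    using proj_sq[of u] orth(2)[of v v] by (simp add: inner_diff_right)
  also have "\<dots> \<le> P u \<bullet> u + (v - P v) \<bullet> v + u \<bullet> v"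
    using closest_point_residual_monotone[OF S, of z1 z2] by (simp add: u_def v_def)
  also have "\<dots> = (P u + (v - P v)) \<bullet> (u + v)"
    using P(3)[of v u]
    by (simp add: inner_add_left inner_add_right inner_diff_left inner_diff_right inner_commute)
  finally show ?thesis
    unfolding diff sum .
qed

lemma firmly_nonexpansive_fixpoint_dist:
  fixes T :: "'a::real_inner \<Rightarrow> 'a"
  assumes firm: "(norm (T x - T y))\<^sup>2 \<le> (T x - T y) \<bullet> (x - y)" and fixpoint: "T y = y"
  shows "(norm (T x - x))\<^sup>2 \<le> (norm (x - y))\<^sup>2 - (norm (T x - y))\<^sup>2"
proof -
  have "T x - x = (T x - y) - (x - y)" by simp
  then have "(norm (T x - x))\<^sup>2 = (norm (T x - y))\<^sup>2 - 2 * ((T x - y) \<bullet> (x - y)) + (norm (x - y))\<^sup>2"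
    by (simp add: power2_norm_eq_inner inner_diff_left inner_diff_right inner_commute)
  then show ?thesis using firm unfolding fixpoint by simp
qed

lemma infdist_sq_decrease:
  assumes "F \<noteq> {}" and le: "\<And>y. y \<in> F \<Longrightarrow> d + (dist x' y)\<^sup>2 \<le> (dist x y)\<^sup>2"
  shows "d + (infdist x' F)\<^sup>2 \<le> (infdist x F)\<^sup>2"
proof -
  have "sqrt (d + (infdist x' F)\<^sup>2) \<le> infdist x F"
    unfolding infdist_notempty[OF \<open>F \<noteq> {}\<close>, of x]
  proof (rule cINF_greatest[OF \<open>F \<noteq> {}\<close>])
    fix y assume "y \<in> F"
    have "(infdist x' F)\<^sup>2 \<le> (dist x' y)\<^sup>2"
      by (rule power_mono[OF infdist_le[OF \<open>y \<in> F\<close>] infdist_nonneg])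
    then show "sqrt (d + (infdist x' F)\<^sup>2) \<le> dist x y"
      using le[OF \<open>y \<in> F\<close>] by (intro real_le_lsqrt) auto
  qed
  then show ?thesis by (rule sqrt_le_D)
qed

lemma firmly_nonexpansive_infdist_fixpoints:
  fixes T :: "'a::real_inner \<Rightarrow> 'a"
  assumes firm: "\<And>x y. (norm (T x - T y))\<^sup>2 \<le> (T x - T y) \<bullet> (x - y)"
    and "F \<noteq> {}" and fixpoints: "\<And>y. y \<in> F \<Longrightarrow> T y = y"
  shows "(norm (T x - x))\<^sup>2 \<le> (infdist x F)\<^sup>2 - (infdist (T x) F)\<^sup>2"
proof -
  have "(norm (T x - x))\<^sup>2 + (dist (T x) y)\<^sup>2 \<le> (dist x y)\<^sup>2" if "y \<in> F" for y
    using firmly_nonexpansive_fixpoint_dist[where T = T and x = x, OF firm fixpoints[OF that]]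
    by (simp add: dist_norm)
  then have "(norm (T x - x))\<^sup>2 + (infdist (T x) F)\<^sup>2 \<le> (infdist x F)\<^sup>2"
    by (rule infdist_sq_decrease[OF \<open>F \<noteq> {}\<close>])
  then show ?thesis by simp
qed

section \<open>The cone of positive semidefinite matrices\<close>

definition outer :: "real^'n \<Rightarrow> real^'n^'n" where
  "outer u = (\<chi> i j. u$i * u$j)"

lemma inner_outer: "(X::real^'n^'n) \<bullet> outer u = u \<bullet> (X *v u)"
  by (simp add: outer_def inner_vec_def matrix_vector_mult_def sum_distrib_left mult_ac)

lemma quadratic_form_outer: "v \<bullet> (outer u *v v) = (u \<bullet> v)\<^sup>2"
  by (simp add: outer_def inner_vec_def matrix_vector_mult_def sum_distrib_left
      power2_eq_square sum_product mult_ac)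

lemma transpose_add: "transpose (A + B) = transpose A + (transpose B :: 'a::semiring_1^'n^'m)"
  by (simp add: transpose_def vec_eq_iff)

lemma transpose_diff: "transpose (A - B) = transpose A - (transpose B :: 'a::ring_1^'n^'m)"
  by (simp add: transpose_def vec_eq_iff)

lemma transpose_outer: "transpose (outer u) = outer u"
  by (simp add: transpose_def outer_def vec_eq_iff mult.commute)

lemma outer_in_psd_cone: "outer u \<in> psd_cone"
  by (simp add: psd_cone_def quadratic_form_outer transpose_outer)

lemma matrix_vector_mult_nth: "((W::real^'n^'m) *v x) $ i = W $ i \<bullet> x"
  by (simp add: matrix_vector_mult_def inner_vec_def)

lemma symmetric_quadratic_form_swap:
  "transpose (W::real^'n^'n) = W \<Longrightarrow> x \<bullet> (W *v y) = y \<bullet> (W *v x)"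
  by (metis dot_lmul_matrix inner_commute vector_transpose_matrix)

lemma symmetric_nth_swap: "transpose (W::'a::semiring_1^'n^'n) = W \<Longrightarrow> W $ i $ j = W $ j $ i"
  by (metis transpose_def vec_lambda_beta)

lemma psd_cone_quadratic_form_shift:
  assumes "W \<in> psd_cone"
  shows "0 \<le> x \<bullet> (W *v x) + 2 * t * (W $ i \<bullet> x) + t\<^sup>2 * W $ i $ i"
proof -
  have sym: "transpose W = W" using assms by (simp add: psd_cone_def)
  have "0 \<le> (x + t *\<^sub>R axis i 1) \<bullet> (W *v (x + t *\<^sub>R axis i 1))"
    using assms by (simp add: psd_cone_def)
  also have "\<dots> = x \<bullet> (W *v x) + 2 * t * (W $ i \<bullet> x) + t\<^sup>2 * W $ i $ i"
    using symmetric_quadratic_form_swap[OF sym, of x "axis i 1"]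
    by (simp add: matrix_vector_mult_nth inner_axis inner_add_left
        inner_add_right inner_axis' scaleR_matrix_vector_assoc[symmetric] power2_eq_square
        algebra_simps)
  finally show ?thesis .
qed

lemma psd_cone_diag_zero_imp_row_zero:
  assumes W: "W \<in> psd_cone" and diag: "W $ i $ i = 0"
  shows "W $ i = 0"
proof (rule ccontr)
  assume "W $ i \<noteq> 0"
  define r where "r = W $ i \<bullet> W $ i"
  define q where "q = W $ i \<bullet> (W *v W $ i)"
  have "0 < r" using \<open>W $ i \<noteq> 0\<close> by (simp add: r_def)
  have "0 \<le> q + 2 * (- (\<bar>q\<bar> + 1) / (2 * r)) * r"
    using psd_cone_quadratic_form_shift[OF W, of "W $ i" "- (\<bar>q\<bar> + 1) / (2 * r)" i]
    by (simp add: diag q_def r_def)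
  also have "\<dots> = q - \<bar>q\<bar> - 1" using \<open>0 < r\<close> by (simp add: field_simps)
  finally show False by linarith
qed

lemma psd_cone_schur_complement:
  assumes W: "W \<in> psd_cone" and pos: "0 < W $ i $ i"
  shows "W - (1 / W $ i $ i) *\<^sub>R outer (W $ i) \<in> psd_cone"
proof -
  let ?w = "W $ i $ i"
  have sym: "transpose W = W" using W by (simp add: psd_cone_def)
  have "0 \<le> x \<bullet> ((W - (1 / ?w) *\<^sub>R outer (W $ i)) *v x)" for x
  proof -
    define t where "t = - (W $ i \<bullet> x) / ?w"
    have "0 \<le> x \<bullet> (W *v x) + 2 * t * (W $ i \<bullet> x) + t\<^sup>2 * ?w"
      by (rule psd_cone_quadratic_form_shift[OF W])
    also have "\<dots> = x \<bullet> (W *v x) - (W $ i \<bullet> x)\<^sup>2 / ?w"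
      using pos by (simp add: t_def field_simps power2_eq_square)
    also have "\<dots> = x \<bullet> ((W - (1 / ?w) *\<^sub>R outer (W $ i)) *v x)"
      by (simp add: matrix_vector_mult_diff_rdistrib scaleR_matrix_vector_assoc[symmetric]
          inner_diff_right quadratic_form_outer inner_commute)
    finally show ?thesis .
  qed
  moreover have "transpose (W - (1 / ?w) *\<^sub>R outer (W $ i)) = W - (1 / ?w) *\<^sub>R outer (W $ i)"
    by (simp add: sym transpose_diff transpose_scalar transpose_outer)
  ultimately show ?thesis by (simp add: psd_cone_def)
qed

text \<open>Self-duality is proved by peeling off rows: a Schur complement step zeroes one more row of
  \<open>W\<close> while splitting off a rank-one psd matrix, whose inner product with \<open>P\<close> is a value of the
  quadratic form of \<open>P\<close>.\<close>
lemma psd_cone_inner_nonneg_rows: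
  fixes P :: "real^'n^'n"
  assumes P: "P \<in> psd_cone" and "finite I"
  shows "W \<in> psd_cone \<Longrightarrow> (\<And>j. j \<notin> I \<Longrightarrow> W $ j = 0) \<Longrightarrow> 0 \<le> P \<bullet> W"
  using \<open>finite I\<close>
proof (induction I arbitrary: W rule: finite_induct)
  case empty
  then have "W = 0" by (simp add: vec_eq_iff)
  then show ?case by simp
next
  case (insert i I)
  show ?case
  proof (cases "W $ i $ i = 0")
    case True
    then have "W $ i = 0" by (rule psd_cone_diag_zero_imp_row_zero[OF insert.prems(1)])
    then show ?thesis using insert by (metis insertE)
  next
    case False
    let ?w = "W $ i $ i"
    define W' where "W' = W - (1 / ?w) *\<^sub>R outer (W $ i)"
    have sym: "transpose W = W" using insert.prems(1) by (simp add: psd_cone_def)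
    have "0 \<le> ?w"
      using psd_cone_quadratic_form_shift[OF insert.prems(1), of 0 1 i] by simp
    with False have pos: "0 < ?w" by simp
    have "W' \<in> psd_cone"
      unfolding W'_def by (rule psd_cone_schur_complement[OF insert.prems(1) pos])
    moreover have "W' $ j = 0" if "j \<notin> I" for j
    proof (cases "j = i")
      case True
      then show ?thesis using pos by (simp add: W'_def vec_eq_iff outer_def)
    next
      case False
      with that insert.prems(2) have "W $ j = 0" by simp
      moreover have "W $ i $ j = W $ j $ i" by (rule symmetric_nth_swap[OF sym])
      ultimately show ?thesis by (simp add: W'_def vec_eq_iff outer_def)
    qed
    ultimately have "0 \<le> P \<bullet> W'" by (rule insert.IH)
    moreover have "0 \<le> P \<bullet> outer (W $ i)"
      using P by (simp add: inner_outer psd_cone_def)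
    moreover have "P \<bullet> W = P \<bullet> W' + (1 / ?w) * (P \<bullet> outer (W $ i))"
      by (simp add: W'_def inner_diff_right)
    ultimately show ?thesis using pos by simp
  qed
qed

lemma psd_cone_inner_nonneg:
  "P \<in> psd_cone \<Longrightarrow> W \<in> psd_cone \<Longrightarrow> 0 \<le> P \<bullet> (W::real^'n^'n)"
  using psd_cone_inner_nonneg_rows[of P UNIV W] by simp

lemma closed_psd_cone: "closed (psd_cone :: (real^'n^'n) set)"
proof -
  have eq: "psd_cone = (\<Inter>i j. {X::real^'n^'n. (axis i (axis j 1) - axis j (axis i 1)) \<bullet> X = 0})
      \<inter> (\<Inter>v. {X. outer v \<bullet> X \<ge> 0})"
    by (auto simp: psd_cone_def inner_diff_left inner_axis' inner_commute[of "outer _"] inner_outer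
        transpose_def vec_eq_iff)
  show ?thesis
    unfolding eq by (intro closed_Int closed_INT ballI closed_hyperplane closed_halfspace_ge)
qed

lemma convex_cone_psd_cone: "convex_cone (psd_cone :: (real^'n^'n) set)"
  unfolding convex_cone_iff psd_cone_def
  by (auto simp: transpose_add transpose_scalar inner_add_right algebra_simps
      scaleR_matrix_vector_assoc[symmetric] transpose_def vec_eq_iff)

lemma convex_psd_cone: "convex psd_cone"
  by (metis convex_cone_def convex_cone_psd_cone)

lemma proj_psd_in_psd_cone: "proj_psd Z \<in> psd_cone"
  unfolding proj_psd_def
  by (rule closest_point_in_set[OF closed_psd_cone convex_cone_nonempty[OF convex_cone_psd_cone]])

lemma proj_psd_minus_self_in_psd_cone:
  assumes "transpose Z = Z"
  shows "proj_psd Z - Z \<in> psd_cone"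
proof -
  have "0 \<le> v \<bullet> ((proj_psd Z - Z) *v v)" for v
    using closest_point_convex_cone_normal[OF convex_cone_psd_cone closed_psd_cone outer_in_psd_cone,
        of Z v]
    by (simp add: proj_psd_def inner_outer[symmetric] inner_diff_left)
  moreover have "transpose (proj_psd Z - Z) = proj_psd Z - Z"
    using proj_psd_in_psd_cone[of Z] assms by (simp add: psd_cone_def transpose_diff)
  ultimately show ?thesis by (simp add: psd_cone_def)
qed

lemma proj_psd_uminus:
  assumes "transpose Z = Z"
  shows "proj_psd (- Z) = proj_psd Z - Z"
  using closest_point_convex_cone_uminus[OF convex_cone_psd_cone closed_psd_cone
      psd_cone_inner_nonneg proj_psd_minus_self_in_psd_cone[OF assms, unfolded proj_psd_def]]
  by (simp add: proj_psd_def)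

section \<open>The constraint operator and the projection onto the range of its adjoint\<close>

lemma matrix_inv_cancel:
  fixes M :: "'a::semiring_1^'n^'m"
  assumes "invertible M"
  shows matrix_mul_matrix_inv: "M ** matrix_inv M = mat 1"
    and matrix_inv_matrix_mul: "matrix_inv M ** M = mat 1"
  using someI_ex[OF assms[unfolded invertible_def]] by (simp_all add: matrix_inv_def)

lemma linear_Aop: "linear (Aop A)"
  by (rule linearI) (simp_all add: Aop_def vec_eq_iff inner_add_right)

lemma linear_Aadj: "linear (Aadj A)"
  by (rule linearI) (simp_all add: Aadj_def scaleR_add_left sum.distrib scaleR_sum_right)

lemma Aadj_inner: "Aadj A y \<bullet> X = y \<bullet> Aop A X"
proof -
  have "Aadj A y \<bullet> X = (\<Sum>i\<in>UNIV. y $ i * (A i \<bullet> X))"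
    by (simp add: Aadj_def inner_sum_left)
  then show ?thesis by (simp add: Aop_def inner_vec_def)
qed

lemma Aop_Aadj: "Aop A (Aadj A y) = AAadj A *v y"
  by (simp add: Aadj_def Aop_def AAadj_def vec_eq_iff matrix_vector_mult_def inner_sum_right
      mult.commute)

lemma transpose_AAadj: "transpose (AAadj A) = AAadj A"
  by (simp add: AAadj_def transpose_def vec_eq_iff inner_commute)

lemma invertible_AAadj:
  assumes "surj (Aop A)"
  shows "invertible (AAadj A)"
proof -
  have zero: "y = 0" if "AAadj A *v y = 0" for y
  proof -
    have "Aadj A y \<bullet> Aadj A y = y \<bullet> (AAadj A *v y)" by (simp add: Aadj_inner Aop_Aadj)
    then have "Aadj A y = 0" using that by simp
    obtain X where "Aop A X = y" using assms by (metis surjD)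
    then have "y \<bullet> y = Aadj A y \<bullet> X" by (simp add: Aadj_inner)
    then show "y = 0" using \<open>Aadj A y = 0\<close> by simp
  qed
  have "inj ((*v) (AAadj A))"
  proof (rule injI)
    fix x y assume "AAadj A *v x = AAadj A *v y"
    then have "AAadj A *v (x - y) = 0" by (simp add: matrix_vector_mult_diff_distrib)
    then show "x = y" using zero by fastforce
  qed
  then show ?thesis
    using invertible_left_inverse matrix_left_invertible_injective by blast
qed

lemma Aadj_in_sym_mats:
  assumes "\<And>i. A i \<in> sym_mats"
  shows "Aadj A y \<in> sym_mats"
proof -
  have "A i $ j $ k = A i $ k $ j" for i j k
    by (rule symmetric_nth_swap) (use assms in \<open>simp add: sym_mats_def\<close>)
  then show ?thesis
    by (simp add: sym_mats_def Aadj_def transpose_def vec_eq_iff sum_component)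
qed

lemma linear_Pop: "linear (Pop A)"
proof -
  have "Pop A = Aadj A \<circ> (\<lambda>v. matrix_inv (AAadj A) *v v) \<circ> Aop A"
    by (simp add: Pop_def fun_eq_iff)
  then show ?thesis
    by (simp add: linear_compose linear_Aop linear_Aadj)
qed

lemma Pop_in_sym_mats: "(\<And>i. A i \<in> sym_mats) \<Longrightarrow> Pop A X \<in> sym_mats"
  unfolding Pop_def by (rule Aadj_in_sym_mats)

context
  fixes A :: "'m::finite \<Rightarrow> real^'n^'n"
  assumes surj_Aop: "surj (Aop A)"
begin

lemma Pop_Aadj: "Pop A (Aadj A y) = Aadj A y"
  using matrix_inv_matrix_mul[OF invertible_AAadj[OF surj_Aop]]
  by (simp add: Pop_def Aop_Aadj matrix_vector_mul_assoc)

lemma Pop_idem: "Pop A (Pop A X) = Pop A X"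
  by (metis Pop_Aadj Pop_def)

lemma Pop_self_adjoint: "Pop A X \<bullet> Y = X \<bullet> Pop A Y"
proof -
  let ?G = "AAadj A" and ?H = "matrix_inv (AAadj A)"
  have GH: "?G *v (?H *v v) = v" for v
    using matrix_mul_matrix_inv[OF invertible_AAadj[OF surj_Aop]]
    by (simp add: matrix_vector_mul_assoc)
  have "Pop A X \<bullet> Y = (?H *v Aop A X) \<bullet> (?G *v (?H *v Aop A Y))"
    by (simp add: Pop_def Aadj_inner GH)
  also have "\<dots> = (?H *v Aop A Y) \<bullet> (?G *v (?H *v Aop A X))"
    by (rule symmetric_quadratic_form_swap[OF transpose_AAadj])
  also have "\<dots> = X \<bullet> Pop A Y"
    by (simp add: Pop_def GH inner_commute[of X] Aadj_inner)
  finally show ?thesis .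
qed

end

section \<open>The ADMM iteration\<close>

lemma subspace_sym_mats: "subspace (sym_mats :: (real^'n^'n) set)"
  by (simp add: subspace_def sym_mats_def transpose_add transpose_scalar)
    (simp add: transpose_def vec_eq_iff)

lemma psd_cone_subset_sym_mats: "psd_cone \<subseteq> sym_mats"
  by (auto simp: psd_cone_def sym_mats_def)

lemma admm_step_eq:
  "admm_step A b C \<sigma> Z =
     Pop A (Z - proj_psd Z) + (proj_psd Z - Pop A (proj_psd Z))
     + (Aadj A (matrix_inv (AAadj A) *v b) + \<sigma> *\<^sub>R Pop A C - \<sigma> *\<^sub>R C)"
proof -
  have double: "- (2 *\<^sub>R proj_psd Z) + Z = (Z - proj_psd Z) - proj_psd Z" by (simp add: scaleR_2)
  show ?thesis
    unfolding admm_step_def double linear_diff[OF linear_Pop] by (simp add: algebra_simps)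
qed

lemma admm_step_in_sym_mats:
  assumes "\<And>i. A i \<in> sym_mats" "C \<in> sym_mats"
  shows "admm_step A b C \<sigma> Z \<in> sym_mats"
  using assms proj_psd_in_psd_cone psd_cone_subset_sym_mats Pop_in_sym_mats Aadj_in_sym_mats
  unfolding admm_step_def
  by (meson subsetD subspace_add subspace_diff subspace_scale subspace_sym_mats)

lemma admm_step_firmly_nonexpansive:
  assumes "surj (Aop A)"
  shows "(norm (admm_step A b C \<sigma> Z1 - admm_step A b C \<sigma> Z2))\<^sup>2
    \<le> (admm_step A b C \<sigma> Z1 - admm_step A b C \<sigma> Z2) \<bullet> (Z1 - Z2)"
  by (rule douglas_rachford_firmly_nonexpansive[OF linear_Pop Pop_idem[OF assms]
        Pop_self_adjoint[OF assms] convex_psd_cone closed_psd_cone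
        convex_cone_nonempty[OF convex_cone_psd_cone]])
    (simp add: admm_step_eq proj_psd_def)

text \<open>Complementarity \<open>X \<bullet> S = 0\<close> makes \<open>X\<close> the projection of \<open>X - \<sigma> S\<close> onto the psd cone.\<close>
lemma admm_fixpoint_of_kkt:
  fixes X S :: "real^'n^'n"
  assumes surj: "surj (Aop A)" and kkt: "(X, y, S) \<in> kkt_set A b C" and \<sigma>: "0 \<le> \<sigma>"
  shows "X - \<sigma> *\<^sub>R S \<in> admm_fixpoints A b C \<sigma>"
proof -
  have X: "Aop A X = b" "X \<in> psd_cone" and S: "Aadj A y + S = C" "S \<in> psd_cone"
    and XS: "X \<bullet> S = 0"
    using kkt by (auto simp: kkt_set_def)
  have proj: "proj_psd (X - \<sigma> *\<^sub>R S) = X"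
    unfolding proj_psd_def
  proof (rule closest_point_eqI[OF convex_psd_cone closed_psd_cone X(2)])
    fix W :: "real^'n^'n" assume "W \<in> psd_cone"
    have "(X - \<sigma> *\<^sub>R S - X) \<bullet> (W - X) = \<sigma> * (X \<bullet> S) - \<sigma> * (S \<bullet> W)"
      by (simp add: inner_diff_right inner_commute algebra_simps)
    also have "\<dots> \<le> 0"
      using XS \<sigma> psd_cone_inner_nonneg[OF S(2) \<open>W \<in> psd_cone\<close>] by simp
    finally show "(X - \<sigma> *\<^sub>R S - X) \<bullet> (W - X) \<le> 0" .
  qed
  have PS: "Pop A S = Pop A C - Aadj A y"
    using S(1) Pop_Aadj[OF surj] by (metis add_diff_cancel_left' linear_diff[OF linear_Pop])
  have Pb: "Aadj A (matrix_inv (AAadj A) *v b) = Pop A X"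
    using X(1) by (simp add: Pop_def)
  have "admm_step A b C \<sigma> (X - \<sigma> *\<^sub>R S)
      = Pop A (- (\<sigma> *\<^sub>R S)) + (X - Pop A X) + (Pop A X + \<sigma> *\<^sub>R Pop A C - \<sigma> *\<^sub>R C)"
    by (simp add: admm_step_eq proj Pb)
  also have "\<dots> = X - \<sigma> *\<^sub>R S"
    using S(1) by (simp add: linear_neg[OF linear_Pop] linear_scale[OF linear_Pop] PS algebra_simps
        flip: scaleR_add_right)
  finally have "admm_step A b C \<sigma> (X - \<sigma> *\<^sub>R S) = X - \<sigma> *\<^sub>R S" .
  moreover have "X - \<sigma> *\<^sub>R S \<in> sym_mats"
    using X(2) S(2) psd_cone_subset_sym_mats
    by (meson subsetD subspace_diff subspace_scale subspace_sym_mats)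
  ultimately show ?thesis by (simp add: admm_fixpoints_def)
qed

lemma admm_step_residual_norm:
  assumes surj: "surj (Aop A)" and sym: "transpose Z = Z" and \<sigma>: "\<sigma> \<noteq> 0"
    and Xt: "Aop A Xt = b"
  shows "(norm (admm_step A b C \<sigma> Z - Z))\<^sup>2 =
    (norm (Pop A (proj_psd Z - Xt)))\<^sup>2
    + \<sigma>\<^sup>2 * (norm (Pperp A ((1 / \<sigma>) *\<^sub>R proj_psd (- Z) - C)))\<^sup>2"
proof -
  define Y where "Y = (1 / \<sigma>) *\<^sub>R proj_psd (- Z) - C"
  have \<sigma>Y: "\<sigma> *\<^sub>R Y = (proj_psd Z - Z) - \<sigma> *\<^sub>R C"
    using \<sigma> by (simp add: Y_def proj_psd_uminus[OF sym] algebra_simps)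
  have "admm_step A b C \<sigma> Z - Z = Pop A (Xt - proj_psd Z) + Pperp A (\<sigma> *\<^sub>R Y)"
    unfolding admm_step_eq Pperp_def \<sigma>Y Xt[symmetric] Pop_def[symmetric]
    by (simp add: linear_add[OF linear_Pop] linear_diff[OF linear_Pop] linear_scale[OF linear_Pop]
        algebra_simps)
  moreover have "orthogonal (Pop A U) (Pperp A V)" for U V
    by (simp add: orthogonal_def Pperp_def inner_diff_right Pop_self_adjoint[OF surj] Pop_idem[OF surj])
  ultimately have "(norm (admm_step A b C \<sigma> Z - Z))\<^sup>2
      = (norm (Pop A (Xt - proj_psd Z)))\<^sup>2 + (norm (Pperp A (\<sigma> *\<^sub>R Y)))\<^sup>2"
    by (simp add: norm_add_Pythagorean)
  also have "\<dots> = (norm (Pop A (proj_psd Z - Xt)))\<^sup>2 + \<sigma>\<^sup>2 * (norm (Pperp A Y))\<^sup>2"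
    by (simp add: Pperp_def linear_scale[OF linear_Pop] norm_minus_commute
        linear_diff[OF linear_Pop] scaleR_diff_right[symmetric] power_mult_distrib)
  finally show ?thesis unfolding Y_def .
qed

theorem lemma4:
  fixes A :: "'m::finite \<Rightarrow> real^'n^'n" and b :: "real^'m" and C :: "real^'n^'n"
    and \<sigma> :: real and Z :: "nat \<Rightarrow> real^'n^'n"
  assumes symA: "\<And>i. A i \<in> sym_mats"
    and symC: "C \<in> sym_mats"
    and surj: "\<forall>c. \<exists>X\<in>sym_mats. Aop A X = c"
    and kkt: "kkt_set A b C \<noteq> {}"
    and sigma: "\<sigma> > 0"
    and Z0: "Z 0 \<in> sym_mats"
    and Zstep: "\<And>k. Z (Suc k) = admm_step A b C \<sigma> (Z k)"
  shows "\<forall>k. (\<forall>Xt\<in>sym_mats. Aop A Xt = b \<longrightarrow>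
            (norm (Z (Suc k) - Z k))\<^sup>2 =
              (norm (Pop A (proj_psd (Z k) - Xt)))\<^sup>2
              + \<sigma>\<^sup>2 * (norm (Pperp A ((1 / \<sigma>) *\<^sub>R proj_psd (- Z k) - C)))\<^sup>2)
         \<and> (norm (Z (Suc k) - Z k))\<^sup>2
             \<le> (infdist (Z k) (admm_fixpoints A b C \<sigma>))\<^sup>2
               - (infdist (Z (Suc k)) (admm_fixpoints A b C \<sigma>))\<^sup>2"
proof -
  have surjA: "surj (Aop A)" using surj by (metis surjI)
  obtain X y S where "(X, y, S) \<in> kkt_set A b C" using kkt by auto
  then have "X - \<sigma> *\<^sub>R S \<in> admm_fixpoints A b C \<sigma>"
    using admm_fixpoint_of_kkt[OF surjA] sigma by simp
  then have fixpoints: "admm_fixpoints A b C \<sigma> \<noteq> {}" by blast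
  have symZ: "transpose (Z k) = Z k" for k
    using Z0 admm_step_in_sym_mats[OF symA symC]
    by (cases k) (simp_all add: Zstep sym_mats_def)
  show ?thesis
    using admm_step_residual_norm[OF surjA symZ] sigma
      firmly_nonexpansive_infdist_fixpoints[OF admm_step_firmly_nonexpansive[OF surjA] fixpoints]
    by (simp add: Zstep admm_fixpoints_def)
qed

end
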